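(* Let $A$ be a complex square matrix, $y$ a complex vector, and $k\ge 1$ an integer. Suppose there is a polynomial $P(X)=c_1X+c_2X^2+\cdots+c_kX^k$ of degree at most $k$ with $P(0)=0$ such that the Hermitian part $H=\tfrac12\big(P(A)^*+P(A)\big)$ of $P(A)$ is positive definite or negative definite. Let $$\rho=\sqrt{1-\left[\frac{\min|\lambda(H)|}{\|P(A)\|_2}\right]^2}.$$ Then $\rho<1$, and for every vector $x_n$ the affine space $$x_n+\operatorname{span}\{r_n,\;Ar_n,\;A^2r_n,\;\ldots,\;A^{k-1}r_n\}$$ contains a vector $x_{n+1}$ with $\|r_{n+1}\|_2\le \rho\,\|r_n\|_2$. The same affine space also contains a vector $x_{n+1}$ (in general a different one) with $\|e_{n+1}\|_2\le\rho\,\|e_n\|_2$.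
   Context: For a vector $x_j$, its residual is $r_j=y-Ax_j$ and its error is $e_j=x_*-x_j$, where $x_*$ is the exact solution of $Ax=y$ (under the hypothesis, $P(A)=A(c_1I+c_2A+\cdots+c_kA^{k-1})$ is nonsingular, so $A$ is nonsingular). $\lambda(H)$ denotes the set of eigenvalues of $H$, so $\min|\lambda(H)|$ is the smallest absolute value of an eigenvalue of $H$. $\|\cdot\|_2$ is the Euclidean vector norm and the induced matrix norm; $M^*$ is the conjugate transpose. *)

theory Defs
  imports "HOL-Analysis.Analysis"
begin

text \<open>Complex n x n matrices are represented as complex ^'n ^'n; the Euclidean
vector norm is the library norm on complex ^'n, and the induced 2-norm of a
matrix M is onorm (\<lambda>x. M *v x).\<close>

primrec matpow :: "complex ^'n ^'n \<Rightarrow> nat \<Rightarrow> complex ^'n ^'n" where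
  "matpow M 0 = mat 1"
| "matpow M (Suc j) = M ** matpow M j"

definition mat_scale :: "complex \<Rightarrow> complex ^'n ^'m \<Rightarrow> complex ^'n ^'m" where
  "mat_scale a M = (\<chi> i j. a * M $ i $ j)"

definition conj_transpose :: "complex ^'n ^'m \<Rightarrow> complex ^'m ^'n" where
  "conj_transpose M = (\<chi> i j. cnj (M $ j $ i))"

definition cinner :: "complex ^'n \<Rightarrow> complex ^'n \<Rightarrow> complex" where
  "cinner x y = (\<Sum>i\<in>UNIV. cnj (x $ i) * y $ i)"

definition matrix_2norm :: "complex ^'n ^'m \<Rightarrow> real" where
  "matrix_2norm M = onorm (\<lambda>x. M *v x)"

definition pos_definite :: "complex ^'n ^'n \<Rightarrow> bool" where
  "pos_definite H \<longleftrightarrow> (\<forall>x. x \<noteq> 0 \<longrightarrow> cinner x (H *v x) \<in> \<real> \<and> Re (cinner x (H *v x)) > 0)"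

definition neg_definite :: "complex ^'n ^'n \<Rightarrow> bool" where
  "neg_definite H \<longleftrightarrow> pos_definite (- H)"

definition eigenvalues :: "complex ^'n ^'n \<Rightarrow> complex set" where
  "eigenvalues M = {l. \<exists>v. v \<noteq> 0 \<and> M *v v = l *s v}"

definition min_abs_eig :: "complex ^'n ^'n \<Rightarrow> real" where
  "min_abs_eig M = Min (norm ` eigenvalues M)"

end

theory Submission
  imports Defs
begin

text \<open>
  Write P = P(A) and H for its Hermitian part, and use the real inner product
  Re (x^* y) on complex vectors. If H is positive definite, then
  Re (x^* P x) = x^* H x \<ge> \<mu> \<parallel>x\<parallel>^2, where \<mu> = min |\<lambda>(H)| is the minimum of the
  Rayleigh quotient of H (if H is negative definite, replace P by -P). Minimizing
  \<parallel>r - \<alpha> P r\<parallel> over real \<alpha> then leaves at most \<parallel>r\<parallel>^2 - (\<mu> \<parallel>r\<parallel> / \<parallel>P\<parallel>)^2.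
  Since P(A) = A q(A) with deg q < k, the update x + \<alpha> q(A) r lies in the Krylov
  space and changes the residual r into r - \<alpha> P r and, as r = A e, the error e
  into e - \<alpha> P e.
\<close>

lemma quadratic_nonneg_imp_linear_coeff_zero:
  fixes b c :: real
  assumes "\<And>t. 0 \<le> 2 * t * b + t\<^sup>2 * c" and "b \<ge> 0"
  shows "b = 0"
proof (rule ccontr)
  assume "b \<noteq> 0"
  with \<open>b \<ge> 0\<close> have "b > 0" by simp
  define s where "s = 1 / (\<bar>c\<bar> + 1)"
  have "s > 0" and "s * \<bar>c\<bar> < 1" by (auto simp: s_def field_simps)
  have "0 \<le> 2 * (- s * b) * b + (- s * b)\<^sup>2 * c" by (rule assms(1))
  also have "\<dots> \<le> 2 * (- s * b) * b + (s * b)\<^sup>2 * \<bar>c\<bar>"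
    using mult_left_mono[OF abs_ge_self, of "(s * b)\<^sup>2" c] by simp
  also have "\<dots> = s * b\<^sup>2 * (s * \<bar>c\<bar> - 2)"
    by (simp add: power2_eq_square algebra_simps)
  also have "\<dots> < 0"
    using \<open>s > 0\<close> \<open>b > 0\<close> \<open>s * \<bar>c\<bar> < 1\<close> by (simp add: mult_pos_neg)
  finally show False by simp
qed

text \<open>The minimum m of the Rayleigh quotient is attained at some unit x0; since
  x0 + t w with w = f x0 - m x0 cannot go below m, the first-order term
  2 t \<parallel>w\<parallel>^2 must vanish, so x0 is an eigenvector.\<close>

lemma self_adjoint_min_rayleigh_eigenvector:
  fixes f :: "'a::euclidean_space \<Rightarrow> 'a"
  assumes "linear f" and self_adjoint: "\<And>x y. inner x (f y) = inner (f x) y"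
  obtains x0 m where "norm x0 = 1" "f x0 = m *\<^sub>R x0" "\<And>x. m * (norm x)\<^sup>2 \<le> inner x (f x)"
proof -
  define q where "q x = inner x (f x)" for x
  have "continuous_on (sphere 0 1) q"
    unfolding q_def using \<open>linear f\<close>
    by (intro continuous_intros linear_continuous_on) (simp add: linear_conv_bounded_linear)
  moreover have "sphere (0::'a) 1 \<noteq> {}" by simp
  ultimately obtain x0 where x0: "x0 \<in> sphere 0 1" and x0_min: "\<And>u. u \<in> sphere 0 1 \<Longrightarrow> q x0 \<le> q u"
    using continuous_attains_inf[OF compact_sphere] by blast
  define m where "m = q x0"
  have q_scale: "q (a *\<^sub>R x) = a\<^sup>2 * q x" for a x
    by (simp add: q_def linear_scale[OF \<open>linear f\<close>] power2_eq_square)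
  have q_ge: "m * (norm x)\<^sup>2 \<le> q x" for x
  proof (cases "x = 0")
    case False
    define u where "u = (1 / norm x) *\<^sub>R x"
    have "m \<le> q u" using x0_min False by (simp add: m_def u_def)
    moreover have "q x = (norm x)\<^sup>2 * q u"
      using False q_scale[of "norm x" u] by (simp add: u_def)
    ultimately show ?thesis
      using mult_right_mono[of m "q u" "(norm x)\<^sup>2"] by (simp add: mult.commute)
  qed (simp add: q_def linear_0[OF \<open>linear f\<close>])
  define w where "w = f x0 - m *\<^sub>R x0"
  have "0 \<le> 2 * t * (norm w)\<^sup>2 + t\<^sup>2 * (q w - m * (norm w)\<^sup>2)" for t
  proof -
    have lin: "f (x0 + t *\<^sub>R w) = f x0 + t *\<^sub>R f w"
      by (simp add: linear_add[OF \<open>linear f\<close>] linear_scale[OF \<open>linear f\<close>])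
    have "inner x0 x0 = 1" using x0 by (simp add: power2_norm_eq_inner[symmetric])
    moreover have "inner w (f x0) - m * inner w x0 = (norm w)\<^sup>2"
      by (simp add: w_def power2_norm_eq_inner inner_diff_right inner_diff_left)
    moreover have "inner x0 (f w) = inner w (f x0)"
      using self_adjoint[of x0 w] by (simp add: inner_commute)
    ultimately have "q (x0 + t *\<^sub>R w) - m * (norm (x0 + t *\<^sub>R w))\<^sup>2
        = 2 * t * (norm w)\<^sup>2 + t\<^sup>2 * (q w - m * (norm w)\<^sup>2)"
      unfolding q_def m_def power2_norm_eq_inner lin
      by (simp add: inner_add_left inner_add_right inner_commute algebra_simps power2_eq_square)
    with q_ge[of "x0 + t *\<^sub>R w"] show ?thesis by simp
  qed
  then have "(norm w)\<^sup>2 = 0" by (intro quadratic_nonneg_imp_linear_coeff_zero) auto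
  then have "f x0 = m *\<^sub>R x0" by (simp add: w_def)
  with x0 q_ge show thesis by (intro that[of x0 m]) (auto simp: q_def)
qed

lemma self_adjoint_eigenvectors_orthogonal:
  fixes f :: "'a::real_inner \<Rightarrow> 'a"
  assumes "\<And>x y. inner x (f y) = inner (f x) y"
    and "f u = a *\<^sub>R u" "f v = b *\<^sub>R v" "a \<noteq> b"
  shows "inner u v = 0"
proof -
  have "b * inner u v = a * inner u v"
    using assms(1)[of u v] assms(2,3) by (simp add: inner_commute)
  with \<open>a \<noteq> b\<close> show ?thesis by simp
qed

lemma finite_self_adjoint_eigenvalues:
  fixes f :: "'a::euclidean_space \<Rightarrow> 'a"
  assumes "\<And>x y. inner x (f y) = inner (f x) y"
  shows "finite {a. \<exists>v. v \<noteq> 0 \<and> f v = a *\<^sub>R v}"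
proof -
  let ?E = "{a. \<exists>v. v \<noteq> 0 \<and> f v = a *\<^sub>R v}"
  define g where "g a = (SOME v. v \<noteq> 0 \<and> f v = a *\<^sub>R v)" for a
  have g: "g a \<noteq> 0 \<and> f (g a) = a *\<^sub>R g a" if "a \<in> ?E" for a
  proof -
    have "\<exists>v. v \<noteq> 0 \<and> f v = a *\<^sub>R v" using that by simp
    then show ?thesis unfolding g_def by (rule someI_ex)
  qed
  have "inj_on g ?E"
  proof (rule inj_onI)
    fix a b assume "a \<in> ?E" "b \<in> ?E" "g a = g b"
    then have "a *\<^sub>R g a = b *\<^sub>R g a" and "g a \<noteq> 0" using g by metis+
    then show "a = b" by simp
  qed
  moreover have "pairwise orthogonal (g ` ?E)"
    unfolding pairwise_def orthogonal_def
    using g self_adjoint_eigenvectors_orthogonal[OF assms] by blast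
  then have "finite (g ` ?E)" by (rule pairwise_orthogonal_imp_finite)
  ultimately show ?thesis using finite_imageD by blast
qed

lemma power2_norm_diff_projection:
  fixes r v :: "'a::real_inner"
  assumes "v \<noteq> 0"
  shows "(norm (r - (inner r v / (norm v)\<^sup>2) *\<^sub>R v))\<^sup>2 = (norm r)\<^sup>2 - (inner r v / norm v)\<^sup>2"
proof -
  have "(norm (r - (inner r v / (norm v)\<^sup>2) *\<^sub>R v))\<^sup>2
      = (norm r)\<^sup>2 - 2 * (inner r v)\<^sup>2 / (norm v)\<^sup>2 + (inner r v)\<^sup>2 / (norm v)\<^sup>2"
    using assms unfolding power2_norm_eq_inner
    by (simp add: inner_diff_left inner_diff_right inner_commute power2_eq_square field_simps)
  then show ?thesis by (simp add: power_divide)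
qed

lemma coercive_minimal_residual_step:
  fixes P :: "'a::real_inner \<Rightarrow> 'a"
  assumes "\<mu> > 0"
    and coercive: "\<And>x. \<mu> * (norm x)\<^sup>2 \<le> inner x (P x)"
    and bounded: "\<And>x. norm (P x) \<le> N * norm x"
  shows "\<exists>\<alpha>::real. norm (r - \<alpha> *\<^sub>R P r) \<le> sqrt (1 - (\<mu> / N)\<^sup>2) * norm r"
proof (cases "r = 0")
  case False
  define a where "a = inner r (P r)"
  define p where "p = norm (P r)"
  have "norm r > 0" using False by simp
  have p_le: "p \<le> N * norm r" using bounded by (simp add: p_def)
  have a_ge: "\<mu> * (norm r)\<^sup>2 \<le> a" using coercive by (simp add: a_def)
  also have "a \<le> norm r * p" unfolding a_def p_def by (rule norm_cauchy_schwarz)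
  also have "\<dots> \<le> N * (norm r)\<^sup>2"
    using p_le \<open>norm r > 0\<close> by (simp add: power2_eq_square mult_left_mono mult.commute)
  finally have "\<mu> * (norm r)\<^sup>2 \<le> N * (norm r)\<^sup>2" .
  then have "\<mu> \<le> N"
    using \<open>norm r > 0\<close> mult_le_cancel_right_pos[of "(norm r)\<^sup>2" \<mu> N] by simp
  have nonneg: "0 \<le> 1 - (\<mu> / N)\<^sup>2"
    using \<open>\<mu> > 0\<close> \<open>\<mu> \<le> N\<close> by (simp add: power_le_one_iff)
  have "0 < \<mu> * (norm r)\<^sup>2" using \<open>\<mu> > 0\<close> \<open>norm r > 0\<close> by simp
  with a_ge have "a > 0" by linarith
  then have "P r \<noteq> 0" and "p > 0" by (auto simp: a_def p_def)
  have "(norm (r - (a / p\<^sup>2) *\<^sub>R P r))\<^sup>2 = (norm r)\<^sup>2 - (a / p)\<^sup>2"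
    unfolding a_def p_def by (rule power2_norm_diff_projection[OF \<open>P r \<noteq> 0\<close>])
  also have "\<dots> \<le> (norm r)\<^sup>2 - (\<mu> * norm r / N)\<^sup>2"
  proof -
    have "\<mu> * norm r / N = (\<mu> * (norm r)\<^sup>2) / (N * norm r)"
      using \<open>norm r > 0\<close> by (simp add: power2_eq_square)
    also have "\<dots> \<le> a / p"
      using a_ge p_le \<open>a > 0\<close> \<open>p > 0\<close> \<open>\<mu> > 0\<close> \<open>norm r > 0\<close> by (intro frac_le) auto
    finally show ?thesis
      using \<open>\<mu> > 0\<close> \<open>\<mu> \<le> N\<close> \<open>norm r > 0\<close> by (simp add: power_mono)
  qed
  also have "\<dots> = (1 - (\<mu> / N)\<^sup>2) * (norm r)\<^sup>2"
    using \<open>\<mu> > 0\<close> \<open>\<mu> \<le> N\<close> by (simp add: power_divide power_mult_distrib field_simps)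
  also have "\<dots> = (sqrt (1 - (\<mu> / N)\<^sup>2) * norm r)\<^sup>2"
    using nonneg by (simp add: power_mult_distrib)
  finally have "norm (r - (a / p\<^sup>2) *\<^sub>R P r) \<le> sqrt (1 - (\<mu> / N)\<^sup>2) * norm r"
    by (rule power2_le_imp_le) (use nonneg in simp)
  then show ?thesis by blast
qed (rule exI[of _ 0], simp)

lemma inner_eq_Re_cinner: "inner x y = Re (cinner x y)"
  by (simp add: inner_vec_def cinner_def inner_complex_def Re_sum)

lemma of_real_vector_scalar_mult: "complex_of_real a *s (v :: complex ^'n) = a *\<^sub>R v"
  by (simp add: vec_eq_iff) (simp add: scaleR_conv_of_real)

lemma cinner_conj_transpose: "cinner x (conj_transpose M *v y) = cinner (M *v x) y"
proof -
  have "cinner x (conj_transpose M *v y) = (\<Sum>i\<in>UNIV. \<Sum>j\<in>UNIV. cnj (x$i) * (cnj (M$j$i) * y$j))"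
    unfolding cinner_def conj_transpose_def matrix_vector_mult_def
    by (simp add: sum_distrib_left)
  also have "\<dots> = (\<Sum>j\<in>UNIV. \<Sum>i\<in>UNIV. cnj (x$i) * (cnj (M$j$i) * y$j))"
    by (rule sum.swap)
  also have "\<dots> = cinner (M *v x) y"
    unfolding cinner_def matrix_vector_mult_def
    by (simp add: sum_distrib_left sum_distrib_right cnj_sum mult_ac)
  finally show ?thesis .
qed

lemma inner_conj_transpose: "inner x (conj_transpose M *v y) = inner (M *v x) y"
  by (simp add: inner_eq_Re_cinner cinner_conj_transpose)

lemma cinner_self: "cinner v v = complex_of_real ((norm v)\<^sup>2)"
proof (rule complex_eqI)
  show "Re (cinner v v) = Re (complex_of_real ((norm v)\<^sup>2))"
    by (simp add: inner_eq_Re_cinner[symmetric] power2_norm_eq_inner)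
qed (simp add: cinner_def Im_sum)

lemma mat_scale_matrix_vector_mult: "mat_scale a M *v x = a *s (M *v x)"
  by (simp add: mat_scale_def matrix_vector_mult_def vec_eq_iff sum_distrib_left mult_ac)

lemma sum_matrix_vector_mult: "(\<Sum>j\<in>S. M j) *v x = (\<Sum>j\<in>S. M j *v x)"
  by (induction S rule: infinite_finite_induct) (auto simp: matrix_vector_mult_add_rdistrib)

lemma matrix_vector_mult_sum: "(M :: complex ^'n ^'m) *v (\<Sum>j\<in>S. v j) = (\<Sum>j\<in>S. M *v v j)"
  by (induction S rule: infinite_finite_induct) (auto simp: matrix_vector_right_distrib)

lemma matpow_commute: "matpow A j ** A = A ** matpow A j"
  by (induction j) (simp_all add: matrix_mul_assoc[symmetric])

lemma matpow_Suc_matrix_vector_mult: "matpow A (Suc j) *v x = matpow A j *v (A *v x)"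
  by (simp add: matrix_vector_mul_assoc matpow_commute)

definition hermitian_part :: "complex ^'n ^'n \<Rightarrow> complex ^'n ^'n" where
  "hermitian_part P = mat_scale (1/2) (conj_transpose P + P)"

lemma hermitian_part_matrix_vector_mult:
  "hermitian_part P *v x = (1/2) *\<^sub>R (conj_transpose P *v x + P *v x)"
  unfolding hermitian_part_def mat_scale_matrix_vector_mult matrix_vector_mult_add_rdistrib
  by (metis of_real_divide of_real_1 of_real_numeral of_real_vector_scalar_mult)

lemma inner_hermitian_part_commute:
  "inner x (hermitian_part P *v y) = inner (hermitian_part P *v x) y"
  by (simp add: hermitian_part_matrix_vector_mult inner_add_left inner_add_right
      inner_conj_transpose inner_commute)

lemma inner_hermitian_part_self: "inner x (hermitian_part P *v x) = inner x (P *v x)"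
  by (simp add: hermitian_part_matrix_vector_mult inner_add_left inner_add_right
      inner_conj_transpose inner_commute)

lemma hermitian_part_uminus: "hermitian_part (- P) = - hermitian_part P"
  by (simp add: hermitian_part_def conj_transpose_def mat_scale_def vec_eq_iff add_divide_distrib)

lemma pos_definite_eigenvalue_real:
  assumes "pos_definite H" and "v \<noteq> 0" and "H *v v = l *s v"
  shows "l \<in> \<real>"
proof -
  have "cinner v (H *v v) = l * cinner v v"
    using assms(3) by (simp add: cinner_def sum_distrib_left mult_ac)
  then have "cinner v (H *v v) = l * complex_of_real ((norm v)\<^sup>2)"
    by (simp add: cinner_self)
  moreover have "cinner v (H *v v) \<in> \<real>"
    using assms(1,2) by (simp add: pos_definite_def)
  ultimately have "l * complex_of_real ((norm v)\<^sup>2) / complex_of_real ((norm v)\<^sup>2) \<in> \<real>"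
    by (metis Reals_divide Reals_of_real)
  with \<open>v \<noteq> 0\<close> show ?thesis by simp
qed

lemma pos_definite_min_abs_eig:
  assumes pd: "pos_definite H"
    and self_adjoint: "\<And>x y. inner x (H *v y) = inner (H *v x) y"
  obtains x0 where "norm x0 = 1" "inner x0 (H *v x0) = min_abs_eig H" "0 < min_abs_eig H"
    "\<And>x. min_abs_eig H * (norm x)\<^sup>2 \<le> inner x (H *v x)"
proof -
  obtain x0 m where x0: "norm x0 = 1" and eig: "H *v x0 = m *\<^sub>R x0"
    and rayleigh: "\<And>x. m * (norm x)\<^sup>2 \<le> inner x (H *v x)"
    using self_adjoint_min_rayleigh_eigenvector[of "(*v) H"] self_adjoint by auto
  have m: "inner x0 (H *v x0) = m"
    using x0 by (simp add: eig power2_norm_eq_inner[symmetric])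
  have "x0 \<noteq> 0" using x0 by auto
  then have "Re (cinner x0 (H *v x0)) > 0"
    using pd unfolding pos_definite_def by blast
  then have "m > 0" using m by (simp add: inner_eq_Re_cinner)
  let ?E = "eigenvalues H"
  have m_eig: "complex_of_real m \<in> ?E"
    using eig \<open>x0 \<noteq> 0\<close> by (auto simp: eigenvalues_def of_real_vector_scalar_mult)
  have eig_bound: "m \<le> norm l \<and> norm l \<in> {a. \<exists>v. v \<noteq> 0 \<and> H *v v = a *\<^sub>R v}" if l_eig: "l \<in> ?E" for l
  proof -
    obtain v where "v \<noteq> 0" and v: "H *v v = l *s v"
      using l_eig unfolding eigenvalues_def by blast
    then have "l \<in> \<real>" by (intro pos_definite_eigenvalue_real[OF pd])
    then obtain a where l: "l = complex_of_real a" by (rule Reals_cases)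
    with v have Hv: "H *v v = a *\<^sub>R v" by (simp add: of_real_vector_scalar_mult)
    have "m * (norm v)\<^sup>2 \<le> a * (norm v)\<^sup>2"
      using rayleigh[of v] by (simp add: Hv power2_norm_eq_inner)
    then have "m \<le> a"
      using \<open>v \<noteq> 0\<close> mult_le_cancel_right_pos[of "(norm v)\<^sup>2" m a] by simp
    with \<open>m > 0\<close> have "norm l = a" by (simp add: l)
    with \<open>m \<le> a\<close> \<open>v \<noteq> 0\<close> Hv show ?thesis by blast
  qed
  have "norm ` ?E \<subseteq> {a. \<exists>v. v \<noteq> 0 \<and> H *v v = a *\<^sub>R v}"
    using eig_bound by blast
  then have "finite (norm ` ?E)"
    using finite_self_adjoint_eigenvalues[of "(*v) H"] self_adjoint finite_subset by blast
  moreover have "m \<in> norm ` ?E"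
    using m_eig \<open>m > 0\<close> image_eqI[of m norm "complex_of_real m"] by simp
  ultimately have "min_abs_eig H = m"
    unfolding min_abs_eig_def using eig_bound by (intro Min_eqI) auto
  with x0 m \<open>m > 0\<close> rayleigh show thesis by (intro that) auto
qed

lemma uminus_matrix_vector_mult: "(- M) *v x = - (M *v (x :: complex ^'n))"
  by (simp add: matrix_vector_mult_def vec_eq_iff sum_negf)

lemma eigenvalues_uminus: "eigenvalues (- H) = uminus ` eigenvalues H"
proof -
  have "(- l) *s v = - (l *s v)" for v :: "complex ^'n" and l
    by (simp add: vec_eq_iff)
  then have "(- (H *v v) = l *s v) \<longleftrightarrow> (H *v v = (- l) *s v)" for v and l :: complex
    by (metis minus_minus)
  then have "l \<in> eigenvalues (- H) \<longleftrightarrow> - l \<in> eigenvalues H" for l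
    unfolding eigenvalues_def uminus_matrix_vector_mult by simp
  then show ?thesis by (force intro: image_eqI[of _ uminus "- _"])
qed

lemma min_abs_eig_uminus: "min_abs_eig (- H) = min_abs_eig H"
  by (simp add: min_abs_eig_def eigenvalues_uminus image_image)

lemma matrix_2norm_uminus: "matrix_2norm (- P) = matrix_2norm (P :: complex ^'n ^'m)"
  unfolding matrix_2norm_def uminus_matrix_vector_mult by (rule onorm_neg)

lemma norm_matrix_vector_mult_le: "norm (P *v x) \<le> matrix_2norm P * norm (x :: complex ^'n)"
  unfolding matrix_2norm_def by (rule onorm) simp

lemma pos_definite_hermitian_part_residual_bound:
  fixes P :: "complex ^'n ^'n"
  defines "\<mu> \<equiv> min_abs_eig (hermitian_part P)" and "N \<equiv> matrix_2norm P"
  assumes "pos_definite (hermitian_part P)"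
  shows "0 < \<mu>" and "\<mu> \<le> N"
    and "\<exists>\<alpha>::real. norm (r - \<alpha> *\<^sub>R (P *v r)) \<le> sqrt (1 - (\<mu> / N)\<^sup>2) * norm r"
proof -
  obtain x0 where x0: "norm x0 = 1" and x0_min: "inner x0 (hermitian_part P *v x0) = \<mu>"
    and \<mu>_pos: "0 < \<mu>" and rayleigh: "\<And>x. \<mu> * (norm x)\<^sup>2 \<le> inner x (hermitian_part P *v x)"
    using pos_definite_min_abs_eig[OF assms(3) inner_hermitian_part_commute] unfolding \<mu>_def by blast
  have coercive: "\<mu> * (norm x)\<^sup>2 \<le> inner x (P *v x)" for x
    using rayleigh[of x] by (simp add: inner_hermitian_part_self)
  show "0 < \<mu>" by (fact \<mu>_pos)
  have "\<mu> = inner x0 (P *v x0)" using x0_min by (simp add: inner_hermitian_part_self)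
  also have "\<dots> \<le> norm x0 * norm (P *v x0)" by (rule norm_cauchy_schwarz)
  also have "\<dots> \<le> N" using norm_matrix_vector_mult_le[of P x0] x0 by (simp add: N_def)
  finally show "\<mu> \<le> N" .
  show "\<exists>\<alpha>::real. norm (r - \<alpha> *\<^sub>R (P *v r)) \<le> sqrt (1 - (\<mu> / N)\<^sup>2) * norm r"
    using coercive_minimal_residual_step[of \<mu> "(*v) P" N r] \<mu>_pos coercive norm_matrix_vector_mult_le
    unfolding N_def by blast
qed

lemma definite_hermitian_part_residual_bound:
  fixes P :: "complex ^'n ^'n"
  defines "\<mu> \<equiv> min_abs_eig (hermitian_part P)" and "N \<equiv> matrix_2norm P"
  assumes "pos_definite (hermitian_part P) \<or> neg_definite (hermitian_part P)"
  shows "0 < \<mu>" and "\<mu> \<le> N"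
    and "\<exists>\<alpha>::real. norm (r - \<alpha> *\<^sub>R (P *v r)) \<le> sqrt (1 - (\<mu> / N)\<^sup>2) * norm r"
proof -
  have "0 < \<mu> \<and> \<mu> \<le> N \<and> (\<exists>\<alpha>::real. norm (r - \<alpha> *\<^sub>R (P *v r)) \<le> sqrt (1 - (\<mu> / N)\<^sup>2) * norm r)"
  proof (cases "pos_definite (hermitian_part P)")
    case True
    then show ?thesis using pos_definite_hermitian_part_residual_bound unfolding \<mu>_def N_def by blast
  next
    case False
    with assms(3) have "pos_definite (hermitian_part (- P))"
      by (simp add: neg_definite_def hermitian_part_uminus)
    note bound = pos_definite_hermitian_part_residual_bound[OF this]
    obtain \<alpha> :: real where "norm (r + \<alpha> *\<^sub>R (P *v r)) \<le> sqrt (1 - (\<mu> / N)\<^sup>2) * norm r"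
      using bound(3)[of r]
      by (auto simp: hermitian_part_uminus min_abs_eig_uminus matrix_2norm_uminus
          uminus_matrix_vector_mult \<mu>_def N_def)
    moreover have "0 < \<mu>" "\<mu> \<le> N"
      using bound(1,2) by (simp_all add: hermitian_part_uminus min_abs_eig_uminus
          matrix_2norm_uminus \<mu>_def N_def)
    ultimately show ?thesis by (metis scaleR_minus_left diff_minus_eq_add)
  qed
  then show "0 < \<mu>" and "\<mu> \<le> N"
    and "\<exists>\<alpha>::real. norm (r - \<alpha> *\<^sub>R (P *v r)) \<le> sqrt (1 - (\<mu> / N)\<^sup>2) * norm r"
    by blast+
qed

lemma matrix_vector_mult_krylov_sum:
  "A *v (\<Sum>j\<in>S. d j *s (matpow A j *v v)) = (\<Sum>j\<in>S. d j *s (matpow A j *v (A *v v)))"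
  by (simp add: matrix_vector_mult_sum vector_scalar_commute matrix_vector_mul_assoc
      matpow_commute[symmetric])

lemma krylov_sum_eq_scaled_polynomial:
  fixes A :: "complex ^'n ^'n"
  shows "(\<Sum>j<k. (complex_of_real \<alpha> * c (Suc j)) *s (matpow A j *v (A *v v)))
     = \<alpha> *\<^sub>R ((\<Sum>j\<in>{1..k}. mat_scale (c j) (matpow A j)) *v v)"
proof -
  have "(\<Sum>j<k. (complex_of_real \<alpha> * c (Suc j)) *s (matpow A j *v (A *v v)))
      = complex_of_real \<alpha> *s (\<Sum>j<k. c (Suc j) *s (matpow A (Suc j) *v v))"
    by (simp add: vec_eq_iff sum_distrib_left mult.assoc matpow_Suc_matrix_vector_mult
        del: matpow.simps)
  also have "(\<Sum>j<k. c (Suc j) *s (matpow A (Suc j) *v v)) = (\<Sum>j\<in>{1..k}. c j *s (matpow A j *v v))"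
    using sum.atLeast1_atMost_eq[of "\<lambda>j. c j *s (matpow A j *v v)" k] by simp
  finally show ?thesis
    by (simp add: sum_matrix_vector_mult mat_scale_matrix_vector_mult of_real_vector_scalar_mult)
qed

lemma krylov_residual_reduction:
  fixes A :: "complex ^'n ^'n" and c :: "nat \<Rightarrow> complex" and k :: nat
  defines "P \<equiv> (\<Sum>j\<in>{1..k}. mat_scale (c j) (matpow A j))"
  assumes "norm ((y - A *v x) - \<alpha> *\<^sub>R (P *v (y - A *v x))) \<le> \<rho> * norm (y - A *v x)"
  shows "\<exists>d. norm (y - A *v (x + (\<Sum>j<k. d j *s (matpow A j *v (y - A *v x)))))
    \<le> \<rho> * norm (y - A *v x)"
proof -
  define r where "r = y - A *v x"
  define d where "d j = complex_of_real \<alpha> * c (Suc j)" for j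
  have "A *v (\<Sum>j<k. d j *s (matpow A j *v r)) = \<alpha> *\<^sub>R (P *v r)"
    unfolding matrix_vector_mult_krylov_sum d_def P_def by (rule krylov_sum_eq_scaled_polynomial)
  then have "y - A *v (x + (\<Sum>j<k. d j *s (matpow A j *v r))) = r - \<alpha> *\<^sub>R (P *v r)"
    by (simp add: r_def matrix_vector_right_distrib)
  with assms(2) show ?thesis unfolding r_def[symmetric] by (metis (no_types))
qed

lemma krylov_error_reduction:
  fixes A :: "complex ^'n ^'n" and c :: "nat \<Rightarrow> complex" and k :: nat
  defines "P \<equiv> (\<Sum>j\<in>{1..k}. mat_scale (c j) (matpow A j))"
  assumes "A *v xstar = y"
    and "norm ((xstar - x) - \<alpha> *\<^sub>R (P *v (xstar - x))) \<le> \<rho> * norm (xstar - x)"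
  shows "\<exists>d. norm (xstar - (x + (\<Sum>j<k. d j *s (matpow A j *v (y - A *v x)))))
    \<le> \<rho> * norm (xstar - x)"
proof -
  define e where "e = xstar - x"
  define d where "d j = complex_of_real \<alpha> * c (Suc j)" for j
  have "y - A *v x = A *v e"
    using assms(2) by (simp add: e_def matrix_vector_mult_diff_distrib)
  moreover have "(\<Sum>j<k. d j *s (matpow A j *v (A *v e))) = \<alpha> *\<^sub>R (P *v e)"
    unfolding d_def P_def by (rule krylov_sum_eq_scaled_polynomial)
  ultimately have "xstar - (x + (\<Sum>j<k. d j *s (matpow A j *v (y - A *v x)))) = e - \<alpha> *\<^sub>R (P *v e)"
    by (simp add: e_def)
  with assms(3) show ?thesis unfolding e_def[symmetric] by (metis (no_types))
qed

theorem theorem1: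
  fixes A :: "complex ^'n ^'n" and y :: "complex ^'n" and k :: nat
    and c :: "nat \<Rightarrow> complex"
  assumes k: "k \<ge> 1"
  defines "PA \<equiv> (\<Sum>j\<in>{1..k}. mat_scale (c j) (matpow A j))"
  defines "H \<equiv> mat_scale (1/2) (conj_transpose PA + PA)"
  assumes def: "pos_definite H \<or> neg_definite H"
  defines "\<rho> \<equiv> sqrt (1 - (min_abs_eig H / matrix_2norm PA)\<^sup>2)"
  shows "\<rho> < 1 \<and>
    (\<forall>xn :: complex ^'n. \<exists>d :: nat \<Rightarrow> complex.
        let xn1 = xn + (\<Sum>j<k. d j *s (matpow A j *v (y - A *v xn))) in
        norm (y - A *v xn1) \<le> \<rho> * norm (y - A *v xn)) \<and>
    (\<forall>xstar xn :: complex ^'n. A *v xstar = y \<longrightarrow> (\<exists>d :: nat \<Rightarrow> complex.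
        let xn1 = xn + (\<Sum>j<k. d j *s (matpow A j *v (y - A *v xn))) in
        norm (xstar - xn1) \<le> \<rho> * norm (xstar - xn)))"
proof -
  have H: "H = hermitian_part PA" by (simp add: H_def hermitian_part_def)
  have pos: "0 < min_abs_eig H" and le: "min_abs_eig H \<le> matrix_2norm PA"
    and step: "\<And>r. \<exists>\<alpha>::real. norm (r - \<alpha> *\<^sub>R (PA *v r)) \<le> \<rho> * norm r"
    using definite_hermitian_part_residual_bound[of PA] def unfolding H \<rho>_def by blast+
  have "\<rho> < 1" using pos le by (simp add: \<rho>_def)
  moreover have "\<exists>d. let xn1 = xn + (\<Sum>j<k. d j *s (matpow A j *v (y - A *v xn))) in
      norm (y - A *v xn1) \<le> \<rho> * norm (y - A *v xn)" for xn
    using step[of "y - A *v xn"] krylov_residual_reduction[where A = A and c = c and k = k and x = xn]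
    unfolding PA_def Let_def by blast
  moreover have "\<exists>d. let xn1 = xn + (\<Sum>j<k. d j *s (matpow A j *v (y - A *v xn))) in
      norm (xstar - xn1) \<le> \<rho> * norm (xstar - xn)" if "A *v xstar = y" for xstar xn
    using step[of "xstar - xn"] krylov_error_reduction[OF that, where c = c and k = k]
    unfolding PA_def Let_def by blast
  ultimately show ?thesis by blast
qed

end
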